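(* Let $0<\gamma<\frac12$ and define on $[0,\frac12)$ the function $g(\epsilon)=3\lambda(4,\epsilon)-4\gamma\log_2(1-2\epsilon)$, where $\lambda(4,\epsilon)=1+\frac13\log_2\big(\epsilon^4+(1-\epsilon)^4\big)$. Then $\min_{0\le\epsilon<\frac12}g(\epsilon)=\psi(4,\gamma)+2h(\gamma)$. Furthermore $g$ is unimodal, decreasing up to its global minimum point $\epsilon_0$ and increasing afterwards, where $\epsilon_0$ is determined by $\gamma=\big(\tfrac12-\epsilon\big)\cdot\frac{(1-\epsilon)^3-\epsilon^3}{(1-\epsilon)^4+\epsilon^4}$.
   Context: $h(t)=t\log_2\frac1t+(1-t)\log_2\frac1{1-t}$. $L_i=\{x\in\{0,1\}^n:|x|=i\}$. $\psi(4,\gamma)=\lim_{n\to\infty}\frac1n\log_2\big|\{(u_1,\dots,u_4)\in L_{\gamma n}^4: u_1+u_2+u_3+u_4=0\}\big|-2h(\gamma)$ (limit over $n$ with $\gamma n$ integer). *)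

theory Defs
  imports "HOL-Analysis.Analysis"
begin

definition h :: "real \<Rightarrow> real" where
  "h t = t * log 2 (1 / t) + (1 - t) * log 2 (1 / (1 - t))"

text \<open>Vectors of {0,1}^n are represented by their supports (subsets of {..<n});
  addition over GF(2) is symmetric difference; Hamming weight is cardinality.\<close>
definition layer :: "nat \<Rightarrow> nat \<Rightarrow> nat set set" where
  "layer n i = {x. x \<subseteq> {..<n} \<and> card x = i}"

definition vadd :: "nat set \<Rightarrow> nat set \<Rightarrow> nat set" where
  "vadd x y = (x - y) \<union> (y - x)"

definition count4 :: "nat \<Rightarrow> nat \<Rightarrow> nat" where
  "count4 n i = card {(u1, u2, u3, u4). u1 \<in> layer n i \<and> u2 \<in> layer n i \<and>
      u3 \<in> layer n i \<and> u4 \<in> layer n i \<and> vadd (vadd (vadd u1 u2) u3) u4 = {}}"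

definition int_mult_filter :: "real \<Rightarrow> nat filter" where
  "int_mult_filter \<gamma> = inf sequentially (principal {n. \<gamma> * real n \<in> \<int>})"

text \<open>\<psi>(4,\<gamma>) + 2h(\<gamma>) is the limit of this sequence along int_mult_filter \<gamma>.\<close>
definition psi_seq :: "real \<Rightarrow> nat \<Rightarrow> real" where
  "psi_seq \<gamma> n = log 2 (real (count4 n (nat \<lfloor>\<gamma> * real n\<rfloor>))) / real n - 2 * h \<gamma>"

definition lambda4 :: "real \<Rightarrow> real" where
  "lambda4 e = 1 + (1/3) * log 2 (e ^ 4 + (1 - e) ^ 4)"

definition g :: "real \<Rightarrow> real \<Rightarrow> real" where
  "g \<gamma> e = 3 * lambda4 e - 4 * \<gamma> * log 2 (1 - 2 * e)"

end

theory Submission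
  imports Defs
begin

text \<open>Substituting \<open>t = 1 - 2\<epsilon>\<close> turns \<open>g\<close> into \<open>log\<^sub>2 Z(t) - 4\<gamma> log\<^sub>2 t\<close> with
  \<open>Z(t) = 1 + 6t\<^sup>2 + t\<^sup>4\<close>, the weight enumerator of the even-weight words of length 4.  Its
  derivative has the sign of \<open>\<Phi>(t) - \<gamma>\<close>, where \<open>\<Phi>(t) = (3t\<^sup>2 + t\<^sup>4) / Z(t)\<close> increases strictly
  from 0 to 1/2 on [0,1]; this gives the unique critical point and unimodality.

  For the limit, read a zero-sum quadruple in \<open>L\<^sub>k\<^sup>4\<close> column by column as a word of length \<open>n\<close>
  over the eight even-weight columns.  Weighting a column of weight \<open>w\<close> by \<open>t\<^sup>w\<close> bounds the count by
  \<open>Z(t)\<^sup>n / t\<^sup>4\<^sup>k\<close>.  Conversely, fixing the number of columns of each type according to the tilted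
  distribution \<open>t\<^sup>w / Z(t)\<close> gives a multinomial lower bound whose exponential rate is the entropy
  of that distribution.  When \<open>\<Phi>(t) = \<gamma>\<close> both rates equal \<open>g\<close> at its minimum.\<close>

section \<open>The critical point and unimodality of \<open>g\<close>\<close>

definition even_enum :: "real \<Rightarrow> real" where
  "even_enum t = 1 + 6 * t^2 + t^4"

definition mean_weight :: "real \<Rightarrow> real" where
  "mean_weight t = (3 * t^2 + t^4) / even_enum t"

definition rate :: "real \<Rightarrow> real \<Rightarrow> real" where
  "rate \<gamma> t = log 2 (even_enum t) - 4 * \<gamma> * log 2 t"

lemma even_enum_pos: "0 < even_enum t"
  unfolding even_enum_def by (simp add: add_pos_nonneg)

lemma even_enum_shift: "e^4 + (1 - e)^4 = even_enum (1 - 2 * e) / 8"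
  unfolding even_enum_def by (simp add: algebra_simps power2_eq_square power4_eq_xxxx)

lemma mean_weight_strict_mono:
  assumes "0 \<le> x" "x < y"
  shows "mean_weight x < mean_weight y"
proof -
  define u v where "u = x^2" and "v = y^2"
  have uv: "0 \<le> u" "u < v"
    using assms unfolding u_def v_def by (auto intro: power_strict_mono)
  have cross: "(3 * v + v^2) * (1 + 6 * u + u^2) - (3 * u + u^2) * (1 + 6 * v + v^2)
      = (v - u) * (3 + u + v + 3 * u * v)"
    by (simp add: algebra_simps power2_eq_square)
  have "0 < (v - u) * (3 + u + v + 3 * u * v)"
    using uv by (intro mult_pos_pos) (auto intro: add_pos_nonneg)
  moreover have "mean_weight x = (3 * u + u^2) / (1 + 6 * u + u^2)"
    "mean_weight y = (3 * v + v^2) / (1 + 6 * v + v^2)"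
    unfolding mean_weight_def even_enum_def u_def v_def by (simp_all add: power_mult[symmetric])
  moreover have "0 < 1 + 6 * u + u^2" "0 < 1 + 6 * v + v^2"
    using uv by (auto intro: add_pos_nonneg)
  ultimately show ?thesis
    using cross by (simp add: divide_less_eq less_divide_eq mult.commute)
qed

lemma mean_weight_0: "mean_weight 0 = 0"
  and mean_weight_1: "mean_weight 1 = 1/2"
  unfolding mean_weight_def even_enum_def by simp_all

lemma continuous_on_mean_weight: "continuous_on A mean_weight"
proof -
  have "continuous_on A even_enum"
    unfolding even_enum_def by (intro continuous_intros)
  then show ?thesis
    unfolding mean_weight_def using even_enum_pos
    by (intro continuous_intros) (auto dest: less_imp_neq[symmetric])
qed

lemma critical_equation_eq_mean_weight:
  "(1/2 - e) * (((1 - e)^3 - e^3) / ((1 - e)^4 + e^4)) = mean_weight (1 - 2 * e)"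
  using even_enum_pos[of "1 - 2 * e"]
  unfolding add.commute[of "(1 - e)^4"] even_enum_shift mean_weight_def
  by (simp add: field_simps) (simp add: algebra_simps power2_eq_square power3_eq_cube power4_eq_xxxx)

lemma g_eq_rate: "g \<gamma> e = rate \<gamma> (1 - 2 * e)"
proof -
  have "log 2 (e^4 + (1 - e)^4) = log 2 (even_enum (1 - 2 * e)) - log 2 8"
    unfolding even_enum_shift using even_enum_pos by (intro log_divide_pos) auto
  moreover have "log 2 (8::real) = 3"
    using log_pow_cancel[of "2::real" 3] by simp
  ultimately show ?thesis
    unfolding g_def lambda4_def rate_def by (simp add: algebra_simps)
qed

lemma rate_has_derivative:
  assumes "0 < t"
  shows "(rate \<gamma> has_real_derivative 4 / (t * ln 2) * (mean_weight t - \<gamma>)) (at t)"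
proof -
  have "(rate \<gamma> has_real_derivative (12*t + 4*t^3) / even_enum t / ln 2 - 4 * \<gamma> * (1 / t / ln 2)) (at t)"
    using assms even_enum_pos[of t] unfolding rate_def[abs_def] log_def even_enum_def
    by (auto intro!: derivative_eq_intros simp: power2_eq_square power3_eq_cube)
  moreover have "(12*t + 4*t^3) / even_enum t / ln 2 - 4 * \<gamma> * (1 / t / ln 2)
      = 4 / (t * ln 2) * (mean_weight t - \<gamma>)"
    using assms even_enum_pos[of t] unfolding mean_weight_def
    by (simp add: field_simps power2_eq_square power3_eq_cube power4_eq_xxxx)
  ultimately show ?thesis by simp
qed

lemma rate_strict_mono_above:
  assumes "mean_weight t0 = \<gamma>" "0 < t0" "t0 \<le> s" "s < t"
  shows "rate \<gamma> s < rate \<gamma> t"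
proof (rule DERIV_pos_imp_increasing_open[OF assms(4)])
  fix x assume x: "s < x" "x < t"
  then have "0 < 4 / (x * ln 2) * (mean_weight x - \<gamma>)"
    using mean_weight_strict_mono[of t0 x] assms by (intro mult_pos_pos) auto
  then show "\<exists>y. (rate \<gamma> has_real_derivative y) (at x) \<and> 0 < y"
    using rate_has_derivative[of x \<gamma>] x assms by auto
qed (use assms in \<open>auto intro!: continuous_at_imp_continuous_on DERIV_isCont[OF rate_has_derivative]\<close>)

lemma rate_strict_antimono_below:
  assumes "mean_weight t0 = \<gamma>" "0 < s" "s < t" "t \<le> t0"
  shows "rate \<gamma> t < rate \<gamma> s"
proof (rule DERIV_neg_imp_decreasing_open[OF assms(3)])
  fix x assume x: "s < x" "x < t"
  then have "4 / (x * ln 2) * (mean_weight x - \<gamma>) < 0"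
    using mean_weight_strict_mono[of x t0] assms by (intro mult_pos_neg) auto
  then show "\<exists>y. (rate \<gamma> has_real_derivative y) (at x) \<and> y < 0"
    using rate_has_derivative[of x \<gamma>] x assms by auto
qed (use assms in \<open>auto intro!: continuous_at_imp_continuous_on DERIV_isCont[OF rate_has_derivative]\<close>)

lemma mean_weight_root:
  assumes "0 < \<gamma>" "\<gamma> < 1/2"
  obtains t where "0 < t" "t < 1" "mean_weight t = \<gamma>"
proof -
  obtain t where "0 \<le> t" "t \<le> 1" "mean_weight t = \<gamma>"
    using IVT'[of mean_weight 0 \<gamma> 1] continuous_on_mean_weight assms
    by (auto simp: mean_weight_0 mean_weight_1)
  moreover have "t \<noteq> 0" "t \<noteq> 1"
    using assms calculation(3) by (auto simp: mean_weight_0 mean_weight_1)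
  ultimately show ?thesis
    by (intro that) auto
qed

lemma mean_weight_inj:
  assumes "0 \<le> x" "0 \<le> y" "mean_weight x = mean_weight y"
  shows "x = y"
  using assms mean_weight_strict_mono[of x y] mean_weight_strict_mono[of y x]
  by (cases x y rule: linorder_cases) auto

lemma g_strict_antimono_below:
  assumes "mean_weight (1 - 2 * e0) = \<gamma>" "e0 < 1/2" "0 \<le> x" "x < y" "y \<le> e0"
  shows "g \<gamma> y < g \<gamma> x"
  using rate_strict_mono_above[OF assms(1), of "1 - 2 * y" "1 - 2 * x"] assms
  by (simp add: g_eq_rate)

lemma g_strict_mono_above:
  assumes "mean_weight (1 - 2 * e0) = \<gamma>" "e0 \<le> x" "x < y" "y < 1/2"
  shows "g \<gamma> x < g \<gamma> y"
  using rate_strict_antimono_below[OF assms(1), of "1 - 2 * y" "1 - 2 * x"] assms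
  by (simp add: g_eq_rate)

section \<open>Upper bound on the number of zero-sum quadruples\<close>

type_synonym pattern = "bool \<times> bool \<times> bool \<times> bool"

definition pattern_weight :: "pattern \<Rightarrow> nat" where
  "pattern_weight p = (case p of (a, b, c, d) \<Rightarrow> of_bool a + of_bool b + of_bool c + of_bool d)"

definition even_patterns :: "pattern set" where
  "even_patterns = {(False, False, False, False), (True, True, False, False), (True, False, True, False),
     (True, False, False, True), (False, True, True, False), (False, True, False, True),
     (False, False, True, True), (True, True, True, True)}"

lemma finite_even_patterns: "finite even_patterns"
  unfolding even_patterns_def by simp

lemma sum_even_patterns: "(\<Sum>p\<in>even_patterns. t ^ pattern_weight p) = even_enum t"
  unfolding even_patterns_def even_enum_def by (simp add: pattern_weight_def power2_eq_square power4_eq_xxxx)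

definition zero_sum_quads :: "nat \<Rightarrow> nat \<Rightarrow> (nat set \<times> nat set \<times> nat set \<times> nat set) set" where
  "zero_sum_quads n i = {(u1, u2, u3, u4). u1 \<in> layer n i \<and> u2 \<in> layer n i \<and>
      u3 \<in> layer n i \<and> u4 \<in> layer n i \<and> vadd (vadd (vadd u1 u2) u3) u4 = {}}"

lemma count4_eq_card: "count4 n i = card (zero_sum_quads n i)"
  unfolding count4_def zero_sum_quads_def ..

lemma finite_zero_sum_quads: "finite (zero_sum_quads n i)"
proof (rule finite_subset)
  show "zero_sum_quads n i \<subseteq> Pow {..<n} \<times> Pow {..<n} \<times> Pow {..<n} \<times> Pow {..<n}"
    unfolding zero_sum_quads_def layer_def by auto
qed auto

lemma vadd_iff: "x \<in> vadd X Y \<longleftrightarrow> (x \<in> X) \<noteq> (x \<in> Y)"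
  unfolding vadd_def by auto

definition column_patterns :: "nat \<Rightarrow> nat set \<times> nat set \<times> nat set \<times> nat set \<Rightarrow> nat \<Rightarrow> pattern" where
  "column_patterns n w =
     (\<lambda>x. if x < n then (case w of (a, b, c, d) \<Rightarrow> (x \<in> a, x \<in> b, x \<in> c, x \<in> d)) else undefined)"

lemma column_patterns_in_even_patterns:
  "w \<in> zero_sum_quads n i \<Longrightarrow> column_patterns n w \<in> {..<n} \<rightarrow>\<^sub>E even_patterns"
  unfolding zero_sum_quads_def column_patterns_def even_patterns_def vadd_def PiE_def extensional_def
  by (auto split: prod.splits)

lemma inj_on_column_patterns: "inj_on (column_patterns n) (zero_sum_quads n i)"
proof (rule inj_onI)
  fix w w' assume w: "w \<in> zero_sum_quads n i" and w': "w' \<in> zero_sum_quads n i"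
    and eq: "column_patterns n w = column_patterns n w'"
  obtain a b c d a' b' c' d' where wd: "w = (a, b, c, d)" "w' = (a', b', c', d')"
    by (cases w, cases w') auto
  have "x \<in> a \<longleftrightarrow> x \<in> a'" "x \<in> b \<longleftrightarrow> x \<in> b'" "x \<in> c \<longleftrightarrow> x \<in> c'" "x \<in> d \<longleftrightarrow> x \<in> d'" for x
    using fun_cong[OF eq, of x] w w' unfolding wd column_patterns_def zero_sum_quads_def layer_def
    by (cases "x < n"; auto)+
  then show "w = w'"
    unfolding wd by blast
qed

lemma sum_pattern_weight_column_patterns:
  assumes "w \<in> zero_sum_quads n i"
  shows "(\<Sum>x<n. pattern_weight (column_patterns n w x)) = 4 * i"
proof -
  obtain a b c d where wd: "w = (a, b, c, d)"
    by (cases w) auto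
  have sub: "a \<subseteq> {..<n}" "b \<subseteq> {..<n}" "c \<subseteq> {..<n}" "d \<subseteq> {..<n}"
    and card: "card a = i" "card b = i" "card c = i" "card d = i"
    using assms unfolding wd zero_sum_quads_def layer_def by auto
  have "(\<Sum>x<n. pattern_weight (column_patterns n w x))
      = (\<Sum>x<n. of_bool (x \<in> a)) + (\<Sum>x<n. of_bool (x \<in> b))
        + (\<Sum>x<n. of_bool (x \<in> c)) + (\<Sum>x<n. of_bool (x \<in> d))"
    unfolding column_patterns_def pattern_weight_def wd sum.distrib[symmetric] by (intro sum.cong) auto
  also have "\<dots> = 4 * i"
    using sub card by (simp add: Int_absorb1)
  finally show ?thesis .
qed

lemma count4_mult_power_le:
  assumes "0 < t"
  shows "real (count4 n i) * t ^ (4 * i) \<le> even_enum t ^ n"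
proof -
  define f where "f = (\<lambda>c. \<Prod>x<n. t ^ pattern_weight (c x))"
  have "real (count4 n i) * t ^ (4 * i) = (\<Sum>w\<in>zero_sum_quads n i. f (column_patterns n w))"
    unfolding count4_eq_card f_def by (simp add: power_sum[symmetric] sum_pattern_weight_column_patterns)
  also have "\<dots> = (\<Sum>c\<in>column_patterns n ` zero_sum_quads n i. f c)"
    by (simp add: sum.reindex[OF inj_on_column_patterns])
  also have "\<dots> \<le> (\<Sum>c\<in>{..<n} \<rightarrow>\<^sub>E even_patterns. f c)"
    using assms
    by (intro sum_mono2 finite_PiE finite_even_patterns image_subsetI column_patterns_in_even_patterns)
      (auto simp: f_def intro: prod_nonneg)
  also have "\<dots> = (\<Prod>x<n. \<Sum>p\<in>even_patterns. t ^ pattern_weight p)"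
    unfolding f_def by (rule prod_sum_PiE[symmetric]) (auto simp: finite_even_patterns)
  also have "\<dots> = even_enum t ^ n"
    by (simp add: sum_even_patterns)
  finally show ?thesis .
qed

section \<open>Multinomial lower bound\<close>

fun disjoint_subsets :: "nat set \<Rightarrow> nat list \<Rightarrow> nat set list set" where
  "disjoint_subsets S [] = {[]}"
| "disjoint_subsets S (m # ms) =
     (\<Union>X\<in>{X. X \<subseteq> S \<and> card X = m}. (#) X ` disjoint_subsets (S - X) ms)"

lemma disjoint_subsets_Cons_iff:
  "Xs \<in> disjoint_subsets S (m # ms) \<longleftrightarrow>
     (\<exists>X Ys. Xs = X # Ys \<and> X \<subseteq> S \<and> card X = m \<and> Ys \<in> disjoint_subsets (S - X) ms)"
  by auto

lemma finite_disjoint_subsets: "finite S \<Longrightarrow> finite (disjoint_subsets S ms)"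
  by (induction ms arbitrary: S) auto

lemma card_disjoint_subsets:
  assumes "finite S" "sum_list ms \<le> card S"
  shows "real (card (disjoint_subsets S ms)) = fact (card S) / ((\<Prod>m\<leftarrow>ms. fact m) * fact (card S - sum_list ms))"
  using assms
proof (induction ms arbitrary: S)
  case (Cons m ms)
  let ?Xs = "{X. X \<subseteq> S \<and> card X = m}"
  have card_rest: "real (card (disjoint_subsets (S - X) ms))
      = fact (card S - m) / ((\<Prod>m\<leftarrow>ms. fact m) * fact (card S - m - sum_list ms))" if "X \<in> ?Xs" for X
    using that Cons.prems Cons.IH[of "S - X"] by (auto simp: card_Diff_subset finite_subset)
  have "card (disjoint_subsets S (m # ms)) = (\<Sum>X\<in>?Xs. card ((#) X ` disjoint_subsets (S - X) ms))"
    using Cons.prems finite_disjoint_subsets by (auto intro!: card_UN_disjoint)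
  also have "\<dots> = (\<Sum>X\<in>?Xs. card (disjoint_subsets (S - X) ms))"
    by (intro sum.cong refl card_image) (auto intro: inj_onI)
  finally have "real (card (disjoint_subsets S (m # ms)))
      = real (card S choose m) * (fact (card S - m) / ((\<Prod>m\<leftarrow>ms. fact m) * fact (card S - m - sum_list ms)))"
    using card_rest Cons.prems by (simp add: n_subsets)
  also have "\<dots> = fact (card S) / ((\<Prod>m\<leftarrow>m # ms. fact m) * fact (card S - sum_list (m # ms)))"
    using Cons.prems by (simp add: binomial_fact field_simps)
  finally show ?case .
qed simp

(* On the literal block-size lists used below this equation makes the simplifier blow up. *)
declare disjoint_subsets.simps(2)[simp del]

text \<open>The block \<open>A\<close> gets column pattern 1111 and the blocks \<open>B\<^sub>j\<close> the six patterns of weight two.\<close>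
fun quad_of_blocks :: "nat set list \<Rightarrow> nat set \<times> nat set \<times> nat set \<times> nat set" where
  "quad_of_blocks [A, B1, B2, B3, B4, B5, B6] =
     (A \<union> B1 \<union> B2 \<union> B3, A \<union> B1 \<union> B4 \<union> B5, A \<union> B2 \<union> B4 \<union> B6, A \<union> B3 \<union> B5 \<union> B6)"

fun blocks_of_quad :: "nat set \<times> nat set \<times> nat set \<times> nat set \<Rightarrow> nat set list" where
  "blocks_of_quad (u1, u2, u3, u4) =
     [u1 \<inter> u2 \<inter> u3, u1 \<inter> u2 - u3, u1 \<inter> u3 - u2, u1 \<inter> u4 - u2, u2 \<inter> u3 - u1, u2 \<inter> u4 - u1, u3 \<inter> u4 - u1]"

lemma disjoint_subsets_7E:
  assumes "Xs \<in> disjoint_subsets S [a, b, b, b, b, b, b]"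
  obtains A B1 B2 B3 B4 B5 B6 where "Xs = [A, B1, B2, B3, B4, B5, B6]"
    "A \<subseteq> S" "B1 \<subseteq> S - A" "B2 \<subseteq> S - A - B1" "B3 \<subseteq> S - A - B1 - B2"
    "B4 \<subseteq> S - A - B1 - B2 - B3" "B5 \<subseteq> S - A - B1 - B2 - B3 - B4"
    "B6 \<subseteq> S - A - B1 - B2 - B3 - B4 - B5"
    "card A = a" "card B1 = b" "card B2 = b" "card B3 = b" "card B4 = b" "card B5 = b" "card B6 = b"
  using assms by (auto simp: disjoint_subsets_Cons_iff)

lemma blocks_of_quad_of_blocks:
  assumes "Xs \<in> disjoint_subsets S [a, b, b, b, b, b, b]"
  shows "blocks_of_quad (quad_of_blocks Xs) = Xs"
  using assms by (elim disjoint_subsets_7E) (simp; intro conjI; blast)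

lemma card_Un_disjoint4:
  assumes "finite P" "finite Q" "finite R" "finite T" "P \<inter> Q = {}" "P \<inter> R = {}" "P \<inter> T = {}"
    "Q \<inter> R = {}" "Q \<inter> T = {}" "R \<inter> T = {}"
  shows "card (P \<union> Q \<union> R \<union> T) = card P + card Q + card R + card T"
  using assms by (simp add: card_Un_disjoint Int_Un_distrib2)

lemma quad_of_blocks_in_zero_sum_quads:
  assumes "Xs \<in> disjoint_subsets {..<n} [a, b, b, b, b, b, b]"
  shows "quad_of_blocks Xs \<in> zero_sum_quads n (a + 3 * b)"
  using assms
proof (elim disjoint_subsets_7E)
  fix A B1 B2 B3 B4 B5 B6
  assume Xs: "Xs = [A, B1, B2, B3, B4, B5, B6]"
    and sub: "A \<subseteq> {..<n}" "B1 \<subseteq> {..<n} - A" "B2 \<subseteq> {..<n} - A - B1" "B3 \<subseteq> {..<n} - A - B1 - B2"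
      "B4 \<subseteq> {..<n} - A - B1 - B2 - B3" "B5 \<subseteq> {..<n} - A - B1 - B2 - B3 - B4"
      "B6 \<subseteq> {..<n} - A - B1 - B2 - B3 - B4 - B5"
    and card: "card A = a" "card B1 = b" "card B2 = b" "card B3 = b" "card B4 = b" "card B5 = b" "card B6 = b"
  have "card (A \<union> B1 \<union> B2 \<union> B3) = a + 3 * b \<and> card (A \<union> B1 \<union> B4 \<union> B5) = a + 3 * b \<and>
      card (A \<union> B2 \<union> B4 \<union> B6) = a + 3 * b \<and> card (A \<union> B3 \<union> B5 \<union> B6) = a + 3 * b"
    using sub card by (intro conjI; subst card_Un_disjoint4) (auto intro: finite_subset)
  moreover have "vadd (vadd (vadd (A \<union> B1 \<union> B2 \<union> B3) (A \<union> B1 \<union> B4 \<union> B5)) (A \<union> B2 \<union> B4 \<union> B6))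
      (A \<union> B3 \<union> B5 \<union> B6) = {}"
    using sub by (auto simp: vadd_iff)
  ultimately show ?thesis
    unfolding Xs zero_sum_quads_def layer_def using sub by auto
qed

lemma multinomial_le_count4:
  assumes "a + 6 * b \<le> n"
  shows "fact n / (fact a * fact b ^ 6 * fact (n - a - 6 * b)) \<le> real (count4 n (a + 3 * b))"
proof -
  let ?Xs = "disjoint_subsets {..<n} [a, b, b, b, b, b, b]"
  have "inj_on quad_of_blocks ?Xs"
    by (rule inj_on_inverseI[where g = blocks_of_quad]) (rule blocks_of_quad_of_blocks)
  then have "card ?Xs \<le> card (zero_sum_quads n (a + 3 * b))"
    by (intro card_inj_on_le[where f = quad_of_blocks] finite_zero_sum_quads)
      (auto intro: quad_of_blocks_in_zero_sum_quads)
  moreover have "real (card ?Xs) = fact n / (fact a * fact b ^ 6 * fact (n - a - 6 * b))"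
    using assms card_disjoint_subsets[of "{..<n}" "[a, b, b, b, b, b, b]"]
    by (simp add: eval_nat_numeral mult.assoc)
  ultimately show ?thesis
    unfolding count4_eq_card by (metis of_nat_le_iff)
qed

section \<open>Factorial estimates\<close>

lemma ln_fact_ge: "real n * ln (real n) - real n \<le> ln (fact n)"
proof (induction n)
  case (Suc n)
  show ?case
  proof (cases "n = 0")
    case False
    then have n: "0 < real n" by simp
    have "1 + 1 / real n = (real n + 1) / real n"
      using n by (simp add: field_simps)
    then have "ln (real n + 1) - ln (real n) = ln (1 + 1 / real n)"
      using n by (simp add: ln_div)
    also have "\<dots> \<le> 1 / real n"
      using n by (intro ln_add_one_self_le_self) auto
    finally have "real n * (ln (real n + 1) - ln (real n)) \<le> 1"
      using n by (simp add: field_simps)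
    moreover have "ln (fact (Suc n)) = ln (real n + 1) + ln (fact n)"
      by (simp add: ln_mult add.commute)
    ultimately show ?thesis
      using Suc.IH by (simp add: algebra_simps)
  qed simp
qed simp

lemma ln_fact_le: "ln (fact n) \<le> (real n + 1) * ln (real n + 1) - real n"
proof (induction n)
  case (Suc n)
  have "ln (real n + 1) - ln (real n + 2) = ln ((real n + 1) / (real n + 2))"
    by (simp add: ln_div)
  also have "\<dots> \<le> (real n + 1) / (real n + 2) - 1"
    by (intro ln_le_minus_one) auto
  finally have "(real n + 2) * (ln (real n + 1) - ln (real n + 2)) \<le> - 1"
    by (simp add: field_simps)
  moreover have "ln (fact (Suc n)) = ln (real n + 1) + ln (fact n)"
    by (simp add: ln_mult add.commute)
  ultimately show ?case
    using Suc.IH by (simp add: algebra_simps)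
qed simp

lemma prod_list_fact_pos: "0 < (\<Prod>m\<leftarrow>ms. fact m :: real)"
  by (induction ms) auto

lemma ln_prod_list_fact: "ln (\<Prod>m\<leftarrow>ms. fact m :: real) = (\<Sum>m\<leftarrow>ms. ln (fact m))"
proof (induction ms)
  case (Cons m ms)
  then show ?case
    using prod_list_fact_pos[of ms] by (simp add: ln_mult)
qed simp

text \<open>The frequencies are shifted by one so that empty parts do not hit \<open>ln 0\<close>.\<close>
lemma ln_multinomial_ge:
  assumes "sum_list ms = n" "0 < n"
  shows "- real n * (\<Sum>m\<leftarrow>ms. (real m + 1) / n * ln ((real m + 1) / n)) - real (length ms) * ln n
    \<le> ln (fact n / (\<Prod>m\<leftarrow>ms. fact m))"
proof -
  define \<phi> where "\<phi> m = (real m + 1) / n * ln ((real m + 1) / n)" for m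
  have part: "ln (fact m) \<le> real n * \<phi> m + ((real m + 1) * ln n - real m)" for m
  proof -
    have "real n * \<phi> m = (real m + 1) * (ln (real m + 1) - ln n)"
      using assms(2) by (simp add: \<phi>_def ln_div)
    then show ?thesis
      using ln_fact_le[of m] by (simp add: algebra_simps)
  qed
  have "(\<Sum>m\<leftarrow>ms. ln (fact m)) \<le> (\<Sum>m\<leftarrow>ms. real n * \<phi> m + ((real m + 1) * ln n - real m))"
    by (intro sum_list_mono part)
  also have "\<dots> = real n * (\<Sum>m\<leftarrow>ms. \<phi> m) + ((\<Sum>m\<leftarrow>ms. real m) + real (length ms)) * ln n
      - (\<Sum>m\<leftarrow>ms. real m)"
    by (simp add: sum_list_subtractf sum_list_addf sum_list_const_mult sum_list_mult_const
        sum_list_triv distrib_right)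
  also have "(\<Sum>m\<leftarrow>ms. real m) = real n"
    using assms(1) sum_list_of_nat[of ms] by simp
  finally have "(\<Sum>m\<leftarrow>ms. ln (fact m))
      \<le> real n * (\<Sum>m\<leftarrow>ms. \<phi> m) + (real n + real (length ms)) * ln n - real n" .
  moreover have "ln (fact n / (\<Prod>m\<leftarrow>ms. fact m)) = ln (fact n) - (\<Sum>m\<leftarrow>ms. ln (fact m) :: real)"
    using prod_list_fact_pos[of ms] by (simp add: ln_div ln_prod_list_fact)
  ultimately show ?thesis
    using ln_fact_ge[of n] unfolding \<phi>_def by (simp add: algebra_simps)
qed

section \<open>The exponential growth rate\<close>

definition pattern_entropy :: "real \<Rightarrow> real \<Rightarrow> real \<Rightarrow> real" where
  "pattern_entropy x y z = - (x * ln x + 6 * (y * ln y) + z * ln z)"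

lemma ln_count4_ge:
  fixes a b c n :: nat
  assumes "a + 6 * b + c = n" "0 < n"
  shows "real n * pattern_entropy ((real a + 1) / n) ((real b + 1) / n) ((real c + 1) / n) - 8 * ln n
    \<le> ln (count4 n (a + 3 * b))"
proof -
  have "real n * pattern_entropy ((real a + 1) / n) ((real b + 1) / n) ((real c + 1) / n) - 8 * ln n
      \<le> ln (fact n / (\<Prod>m\<leftarrow>[a, b, b, b, b, b, b, c]. fact m))"
  proof -
    have "(\<Sum>m\<leftarrow>[a, b, b, b, b, b, b, c]. (real m + 1) / n * ln ((real m + 1) / n))
        = - pattern_entropy ((real a + 1) / n) ((real b + 1) / n) ((real c + 1) / n)"
      by (simp add: pattern_entropy_def)
    then show ?thesis
      using ln_multinomial_ge[of "[a, b, b, b, b, b, b, c]" n] assms by simp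
  qed
  also have "\<dots> \<le> ln (count4 n (a + 3 * b))"
  proof -
    have "n - a - 6 * b = c"
      using assms(1) by simp
    then show ?thesis
      using multinomial_le_count4[of a b n] assms
      by (intro ln_mono) (simp_all add: eval_nat_numeral mult.assoc)
  qed
  finally show ?thesis .
qed

lemma pattern_entropy_tilted:
  assumes "0 < t"
  shows "pattern_entropy (t^4 / even_enum t) (t^2 / even_enum t) (1 / even_enum t)
    = ln (even_enum t) - 4 * mean_weight t * ln t"
proof -
  define Z where "Z = even_enum t"
  have "0 < Z"
    unfolding Z_def by (rule even_enum_pos)
  then have "pattern_entropy (t^4 / Z) (t^2 / Z) (1 / Z)
      = ln Z * ((1 + 6 * t^2 + t^4) / Z) - 4 * ((3 * t^2 + t^4) / Z) * ln t"
    using assms by (simp add: pattern_entropy_def ln_div ln_realpow field_simps)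
  then show ?thesis
    using \<open>0 < Z\<close> unfolding Z_def mean_weight_def by (simp add: even_enum_def)
qed

lemma ratio_tendsto_of_bounded_error:
  fixes f :: "nat \<Rightarrow> real"
  assumes "\<forall>\<^sub>F n in sequentially. \<bar>f n - y * real n\<bar> \<le> C"
  shows "(\<lambda>n. f n / real n) \<longlonglongrightarrow> y"
proof -
  have "(\<lambda>n. (f n - y * real n) / real n) \<longlonglongrightarrow> 0"
  proof (rule Lim_null_comparison)
    show "\<forall>\<^sub>F n in sequentially. norm ((f n - y * real n) / real n) \<le> C / real n"
      using assms by eventually_elim (simp add: divide_right_mono)
    show "(\<lambda>n. C / real n) \<longlonglongrightarrow> 0"
      by (rule lim_const_over_n)
  qed
  then have "(\<lambda>n. y + (f n - y * real n) / real n) \<longlonglongrightarrow> y"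
    using tendsto_add[OF tendsto_const] by fastforce
  moreover have "\<forall>\<^sub>F n in sequentially. y + (f n - y * real n) / real n = f n / real n"
    using eventually_gt_at_top[of 0] by eventually_elim (simp add: field_simps)
  ultimately show ?thesis
    by (rule Lim_transform_eventually)
qed

lemma nat_floor_gt_diff_one: "0 \<le> y \<Longrightarrow> y - 1 < real (nat \<lfloor>y\<rfloor>)"
  by linarith

lemma ln_count4_le:
  assumes "0 < t" "t \<le> 1" "0 \<le> \<gamma>" "real k \<le> \<gamma> * real n"
  shows "ln (count4 n k) \<le> real n * (ln (even_enum t) - 4 * \<gamma> * ln t)"
proof (cases "count4 n k = 0")
  case True
  have "1 \<le> even_enum t"
    unfolding even_enum_def by simp
  moreover have "4 * \<gamma> * ln t \<le> 0"
    using assms by (simp add: mult_nonneg_nonpos)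
  ultimately have "0 \<le> ln (even_enum t) - 4 * \<gamma> * ln t"
    using ln_ge_zero[of "even_enum t"] by linarith
  then show ?thesis
    using True by simp
next
  case False
  have "ln (count4 n k) + real (4 * k) * ln t \<le> real n * ln (even_enum t)"
    using count4_mult_power_le[OF assms(1), of n k] assms(1) False even_enum_pos[of t]
    by (simp add: ln_mult ln_realpow flip: ln_le_cancel_iff)
  moreover have "4 * \<gamma> * real n * ln t \<le> real (4 * k) * ln t"
    using assms by (intro mult_right_mono_neg) auto
  ultimately show ?thesis
    by (simp add: algebra_simps)
qed

text \<open>Block sizes realising a pattern distribution with mass \<open>pa\<close> on 1111, \<open>pb\<close> on each
  weight-two pattern and \<open>pc\<close> on 0000, with every coordinate of weight \<open>\<lfloor>\<gamma> n\<rfloor>\<close>.\<close>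
locale pattern_distribution =
  fixes \<gamma> pa pb pc :: real
  assumes pos: "0 < pa" "0 < pb" "0 < pc"
    and marginal: "pa + 3 * pb = \<gamma>"
    and total: "pa + 6 * pb + pc = 1"
begin

definition weight :: "nat \<Rightarrow> nat" where "weight n = nat \<lfloor>\<gamma> * real n\<rfloor>"
definition pair_size :: "nat \<Rightarrow> nat" where "pair_size n = nat \<lfloor>pb * real n\<rfloor>"
definition full_size :: "nat \<Rightarrow> nat" where "full_size n = weight n - 3 * pair_size n"
definition empty_size :: "nat \<Rightarrow> nat" where "empty_size n = n - weight n - 3 * pair_size n"

lemma weight_bounds: "\<gamma> * real n - 1 \<le> real (weight n)" "real (weight n) \<le> \<gamma> * real n"
  using pos marginal unfolding weight_def
  by (auto intro!: nat_floor_gt_diff_one[THEN less_imp_le] of_nat_floor)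

lemma pair_size_bounds: "pb * real n - 1 \<le> real (pair_size n)" "real (pair_size n) \<le> pb * real n"
  using pos unfolding pair_size_def by (auto intro!: nat_floor_gt_diff_one[THEN less_imp_le] of_nat_floor)

lemma masses_scaled:
  "pa * real n = \<gamma> * real n - 3 * (pb * real n)"
  "pc * real n = real n - \<gamma> * real n - 3 * (pb * real n)"
proof -
  have "pa = \<gamma> - 3 * pb" "pc = 1 - \<gamma> - 3 * pb"
    using marginal total by linarith+
  then show "pa * real n = \<gamma> * real n - 3 * (pb * real n)"
    and "pc * real n = real n - \<gamma> * real n - 3 * (pb * real n)"
    by (simp_all only: left_diff_distrib mult.assoc mult_1_left)
qed

lemma eventually_sizes:
  "\<forall>\<^sub>F n in sequentially. 0 < n \<and> full_size n + 6 * pair_size n + empty_size n = n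
     \<and> full_size n + 3 * pair_size n = weight n
     \<and> real (full_size n) = real (weight n) - 3 * real (pair_size n)
     \<and> real (empty_size n) = real n - real (weight n) - 3 * real (pair_size n)"
proof -
  obtain N where N: "1 / pa < real N"
    using reals_Archimedean2 by blast
  have "0 < n \<and> 3 * pair_size n \<le> weight n \<and> weight n + 3 * pair_size n \<le> n" if "N \<le> n" for n
  proof (intro conjI)
    have "1 / pa < real n"
      using N that by linarith
    then have "1 < pa * real n"
      using pos by (simp add: field_simps)
    then show "0 < n"
      using pos by (auto intro: ccontr)
    show "3 * pair_size n \<le> weight n"
      using \<open>1 < pa * real n\<close> masses_scaled(1)[of n] weight_bounds[of n] pair_size_bounds[of n]
      by linarith
    show "weight n + 3 * pair_size n \<le> n"
      using masses_scaled(2)[of n] weight_bounds[of n] pair_size_bounds[of n] pos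
        mult_nonneg_nonneg[of pc "real n"] by linarith
  qed
  then show ?thesis
    using eventually_ge_at_top[of N]
    by (elim eventually_mono) (auto simp: full_size_def empty_size_def of_nat_diff)
qed

lemma size_ratios_tendsto:
  "(\<lambda>n. (real (full_size n) + 1) / real n) \<longlonglongrightarrow> pa"
  "(\<lambda>n. (real (pair_size n) + 1) / real n) \<longlonglongrightarrow> pb"
  "(\<lambda>n. (real (empty_size n) + 1) / real n) \<longlonglongrightarrow> pc"
proof -
  have "\<forall>\<^sub>F n in sequentially. \<bar>real (full_size n) + 1 - pa * real n\<bar> \<le> 5
      \<and> \<bar>real (empty_size n) + 1 - pc * real n\<bar> \<le> 5"
    using eventually_sizes
  proof eventually_elim
    case (elim n)
    then show ?case
      using masses_scaled[of n] weight_bounds[of n] pair_size_bounds[of n] by (simp add: abs_le_iff)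
  qed
  then show "(\<lambda>n. (real (full_size n) + 1) / real n) \<longlonglongrightarrow> pa"
    and "(\<lambda>n. (real (empty_size n) + 1) / real n) \<longlonglongrightarrow> pc"
    by (auto intro: ratio_tendsto_of_bounded_error elim: eventually_mono)
  have "\<bar>real (pair_size n) + 1 - pb * real n\<bar> \<le> 2" for n
    using pair_size_bounds[of n] by linarith
  then show "(\<lambda>n. (real (pair_size n) + 1) / real n) \<longlonglongrightarrow> pb"
    by (intro ratio_tendsto_of_bounded_error always_eventually) auto
qed

definition entropy_bound :: "nat \<Rightarrow> real" where
  "entropy_bound n = pattern_entropy ((real (full_size n) + 1) / real n) ((real (pair_size n) + 1) / real n)
     ((real (empty_size n) + 1) / real n) - 8 * (ln (real n) / real n)"

lemma entropy_bound_tendsto: "entropy_bound \<longlonglongrightarrow> pattern_entropy pa pb pc"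
proof -
  have "entropy_bound \<longlonglongrightarrow> pattern_entropy pa pb pc - 8 * 0"
    unfolding entropy_bound_def pattern_entropy_def using pos
    by (intro tendsto_intros size_ratios_tendsto lim_ln_over_n) auto
  then show ?thesis
    by simp
qed

lemma entropy_bound_le_ln_count4:
  "\<forall>\<^sub>F n in sequentially. entropy_bound n \<le> ln (count4 n (weight n)) / real n"
  using eventually_sizes
proof eventually_elim
  case (elim n)
  define E where "E = pattern_entropy ((real (full_size n) + 1) / real n)
    ((real (pair_size n) + 1) / real n) ((real (empty_size n) + 1) / real n)"
  have "(real n * E - 8 * ln (real n)) / real n \<le> ln (count4 n (weight n)) / real n"
    using elim ln_count4_ge[of "full_size n" "pair_size n" "empty_size n" n]
    unfolding E_def by (intro divide_right_mono) auto
  moreover have "(real n * E - 8 * ln (real n)) / real n = entropy_bound n"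
    using elim unfolding entropy_bound_def E_def by (simp add: field_simps)
  ultimately show ?case
    by simp
qed

end

lemma ln_count4_tendsto:
  assumes "0 < t" "t < 1" "mean_weight t = \<gamma>"
  shows "(\<lambda>n. ln (count4 n (nat \<lfloor>\<gamma> * real n\<rfloor>)) / real n)
    \<longlonglongrightarrow> ln (even_enum t) - 4 * \<gamma> * ln t"
proof -
  define Z where "Z = even_enum t"
  have "0 < Z"
    unfolding Z_def by (rule even_enum_pos)
  interpret pattern_distribution \<gamma> "t^4 / Z" "t^2 / Z" "1 / Z"
  proof
    show "0 < t^4 / Z" "0 < t^2 / Z" "0 < 1 / Z"
      using assms(1) \<open>0 < Z\<close> by auto
    show "t^4 / Z + 3 * (t^2 / Z) = \<gamma>" "t^4 / Z + 6 * (t^2 / Z) + 1 / Z = 1"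
      using assms(3) \<open>0 < Z\<close> unfolding Z_def mean_weight_def
      by (simp_all add: add_divide_distrib[symmetric] even_enum_def add.commute)
  qed
  have "0 \<le> \<gamma>"
    using assms mean_weight_strict_mono[of 0 t] by (simp add: mean_weight_0)
  have "\<forall>\<^sub>F n in sequentially. ln (count4 n (weight n)) / real n \<le> ln Z - 4 * \<gamma> * ln t"
    using eventually_gt_at_top[of 0]
  proof eventually_elim
    case (elim n)
    have "ln (count4 n (weight n)) \<le> (ln Z - 4 * \<gamma> * ln t) * real n"
      using ln_count4_le[of t \<gamma> "weight n" n] assms \<open>0 \<le> \<gamma>\<close> weight_bounds(2)[of n]
      unfolding Z_def by (simp add: mult.commute)
    then show ?case
      using elim by (simp add: pos_divide_le_eq)
  qed
  moreover have "pattern_entropy (t^4 / Z) (t^2 / Z) (1 / Z) = ln Z - 4 * \<gamma> * ln t"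
    using pattern_entropy_tilted[OF assms(1)] assms(3) unfolding Z_def by simp
  ultimately show ?thesis
    using tendsto_sandwich[OF entropy_bound_le_ln_count4 _ entropy_bound_tendsto tendsto_const]
    unfolding weight_def Z_def by simp
qed

lemma psi_seq_tendsto:
  assumes "0 < t" "t < 1" "mean_weight t = \<gamma>"
  shows "(psi_seq \<gamma> \<longlongrightarrow> rate \<gamma> t - 2 * h \<gamma>) (int_mult_filter \<gamma>)"
proof -
  have "(\<lambda>n. ln (count4 n (nat \<lfloor>\<gamma> * real n\<rfloor>)) / real n / ln 2)
      \<longlonglongrightarrow> (ln (even_enum t) - 4 * \<gamma> * ln t) / ln 2"
    by (intro tendsto_divide tendsto_const ln_count4_tendsto assms) simp
  then have "psi_seq \<gamma> \<longlonglongrightarrow> rate \<gamma> t - 2 * h \<gamma>"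
    unfolding psi_seq_def rate_def log_def
    by (intro tendsto_diff tendsto_const) (simp add: diff_divide_distrib mult.commute)
  then show ?thesis
    unfolding int_mult_filter_def by (rule filterlim_mono) auto
qed

theorem lemma3p1:
  fixes \<gamma> :: real
  assumes "0 < \<gamma>" and "\<gamma> < 1/2"
  shows "\<exists>e0. 0 \<le> e0 \<and> e0 < 1/2
    \<and> \<gamma> = (1/2 - e0) * (((1 - e0) ^ 3 - e0 ^ 3) / ((1 - e0) ^ 4 + e0 ^ 4))
    \<and> (\<forall>e. 0 \<le> e \<and> e < 1/2 \<and>
          \<gamma> = (1/2 - e) * (((1 - e) ^ 3 - e ^ 3) / ((1 - e) ^ 4 + e ^ 4)) \<longrightarrow> e = e0)
    \<and> (\<forall>e. 0 \<le> e \<and> e < 1/2 \<longrightarrow> g \<gamma> e0 \<le> g \<gamma> e)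
    \<and> (\<forall>x y. 0 \<le> x \<and> x < y \<and> y \<le> e0 \<longrightarrow> g \<gamma> y < g \<gamma> x)
    \<and> (\<forall>x y. e0 \<le> x \<and> x < y \<and> y < 1/2 \<longrightarrow> g \<gamma> x < g \<gamma> y)
    \<and> (psi_seq \<gamma> \<longlongrightarrow> g \<gamma> e0 - 2 * h \<gamma>) (int_mult_filter \<gamma>)"
proof -
  obtain t0 where t0: "0 < t0" "t0 < 1" "mean_weight t0 = \<gamma>"
    using mean_weight_root[OF assms] .
  define e0 where "e0 = (1 - t0) / 2"
  have "1 - 2 * e0 = t0"
    unfolding e0_def by (simp add: field_simps)
  then have root: "mean_weight (1 - 2 * e0) = \<gamma>" "0 \<le> e0" "e0 < 1/2"
    using t0 by auto
  show ?thesis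
  proof (intro exI[of _ e0] conjI allI impI; (elim conjE)?)
    show "0 \<le> e0" "e0 < 1/2"
      using root by simp_all
    show "\<gamma> = (1/2 - e0) * (((1 - e0) ^ 3 - e0 ^ 3) / ((1 - e0) ^ 4 + e0 ^ 4))"
      unfolding critical_equation_eq_mean_weight using root by simp
    show "e = e0" if "0 \<le> e" "e < 1/2"
      and "\<gamma> = (1/2 - e) * (((1 - e) ^ 3 - e ^ 3) / ((1 - e) ^ 4 + e ^ 4))" for e
      using mean_weight_inj[of "1 - 2 * e" "1 - 2 * e0"] that root
      unfolding critical_equation_eq_mean_weight by simp
    show "g \<gamma> y < g \<gamma> x" if "0 \<le> x" "x < y" "y \<le> e0" for x y
      using g_strict_antimono_below[OF root(1,3) that] .
    show "g \<gamma> x < g \<gamma> y" if "e0 \<le> x" "x < y" "y < 1/2" for x y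
      using g_strict_mono_above[OF root(1) that] .
    show "g \<gamma> e0 \<le> g \<gamma> e" if "0 \<le> e" "e < 1/2" for e
      using that g_strict_antimono_below[OF root(1,3), of e e0] g_strict_mono_above[OF root(1), of e0 e]
      by (cases e e0 rule: linorder_cases) auto
    show "(psi_seq \<gamma> \<longlongrightarrow> g \<gamma> e0 - 2 * h \<gamma>) (int_mult_filter \<gamma>)"
      using psi_seq_tendsto[OF t0] by (simp add: g_eq_rate \<open>1 - 2 * e0 = t0\<close>)
  qed
qed

end
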